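(* For every instance and every seller $k\in S$, $r_k\ge(1-\theta)r^\star$, where $\theta=c_{\max}/B$, $r^\star$ is the stopping rate of $\mathrm{EnvyFree}(f)$ on the cost vector $c$, and $r_k$ is the stopping rate of $\mathrm{EnvyFree}(f)$ on the cost vector obtained from $c$ by replacing $c_k$ with $0$, with $f(x)=\ln(e-x)$ for $0\le x\le e-1$ and $f(x)=0$ otherwise.
   Context: Setting: a buyer with budget $B>0$ faces a finite set $S$ of sellers; seller $i$ owns one divisible item giving utility $u_i>0$ and has cost $c_i\ge0$; $c_{\max}=\max_ic_i$. For $r>0$: $f_r(x)=f(x/r)$, $Q_r(x)=xf_r(x)+\int_x^\infty f_r(y)\,dy$, $P_{i,r}(x)=u_iQ_r(x/u_i)$. The stopping rate of $\mathrm{EnvyFree}(f)$ on a cost vector $c'$ is the value at which, decreasing $r$ from $\infty$, the nondecreasing continuous function $r\mapsto\sum_iP_{i,r}(c'_i)$ first equals $B$. *)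

theory Defs
  imports "HOL-Analysis.Analysis"
begin

definition scaled :: "(real \<Rightarrow> real) \<Rightarrow> real \<Rightarrow> real \<Rightarrow> real" where
  "scaled f r x = f (x / r)"

definition Qfun :: "(real \<Rightarrow> real) \<Rightarrow> real \<Rightarrow> real \<Rightarrow> real" where
  "Qfun f r x = x * scaled f r x + integral {x..} (\<lambda>y. scaled f r y)"

definition Pfun :: "(real \<Rightarrow> real) \<Rightarrow> real \<Rightarrow> real \<Rightarrow> real \<Rightarrow> real" where
  "Pfun f ui r x = ui * Qfun f r (x / ui)"

definition total_pay :: "(real \<Rightarrow> real) \<Rightarrow> 'a set \<Rightarrow> ('a \<Rightarrow> real) \<Rightarrow> ('a \<Rightarrow> real) \<Rightarrow> real \<Rightarrow> real" where
  "total_pay f S u c' r = (\<Sum>i\<in>S. Pfun f (u i) r (c' i))"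

text \<open>Stopping rate of EnvyFree(f): decreasing r from infinity, the first r at which
  the (nondecreasing, continuous) total payment equals B, i.e. the largest such r.\<close>
definition stopping_rate :: "(real \<Rightarrow> real) \<Rightarrow> real \<Rightarrow> 'a set \<Rightarrow> ('a \<Rightarrow> real) \<Rightarrow> ('a \<Rightarrow> real) \<Rightarrow> real" where
  "stopping_rate f B S u c' = Sup {r. r > 0 \<and> total_pay f S u c' r = B}"

definition f_log :: "real \<Rightarrow> real" where
  "f_log x = (if 0 \<le> x \<and> x \<le> exp 1 - 1 then ln (exp 1 - x) else 0)"

end

theory Submission imports Defs begin

text \<open>For \<open>f_log\<close> the scaled payment has the closed form \<open>Q\<^sub>r(x) = r Q(x/r)\<close>, where
  \<open>Q\<close> is antitone with \<open>Q(0) = 1\<close> and \<open>Q(t) \<ge> 1 - t\<close>. Antitonicity makes the total payment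
  at a rate \<open>\<rho> \<le> r\<close> at most \<open>\<rho>/r\<close> times the payment at \<open>r\<close>, and setting \<open>c\<^sub>k\<close> to \<open>0\<close>
  raises seller \<open>k\<close>'s payment by at most \<open>c\<^sub>k\<close>. So at the rate \<open>\<rho> = (1 - \<theta>) r\<^sup>\<star>\<close> the modified
  instance pays at most \<open>(1 - \<theta>) B + c\<^sub>k \<le> B\<close>; since payments grow without bound in the rate,
  the intermediate value theorem yields a stopping rate of the modified instance above \<open>\<rho>\<close>.\<close>

definition Q_log :: "real \<Rightarrow> real" where
  "Q_log t = exp 1 * ln (exp 1 - min t (exp 1 - 1)) - exp 1 + min t (exp 1 - 1) + 1"

lemma exp_1_ge_2: "exp (1::real) \<ge> 2"
  using exp_ge_add_one_self[of "1::real"] by simp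

lemma has_integral_scaled_f_log:
  assumes r: "r > 0" and x: "0 \<le> x" "x \<le> r * (exp 1 - 1)"
  shows "(scaled f_log r has_integral
           r * ((exp 1 - x / r) * ln (exp 1 - x / r) - (exp 1 - x / r)) + r) {x..}"
proof -
  define b where "b = r * (exp 1 - 1)"
  define F where "F y = - r * ((exp 1 - y / r) * ln (exp 1 - y / r) - (exp 1 - y / r))" for y
  have "(F has_real_derivative ln (exp 1 - y / r)) (at y)" if y: "y \<in> {x..b}" for y
  proof -
    have "exp 1 - y / r > 0"
      using y r exp_1_ge_2 by (simp add: b_def field_simps)
    then have "((\<lambda>z. z * ln z - z) has_real_derivative ln (exp 1 - y / r)) (at (exp 1 - y / r))"
      by (auto intro!: derivative_eq_intros)
    moreover have "((\<lambda>y. exp 1 - y / r) has_real_derivative - 1 / r) (at y)"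
      using r by (auto intro!: derivative_eq_intros)
    ultimately have "((\<lambda>y. - r * ((\<lambda>z. z * ln z - z) (exp 1 - y / r))) has_real_derivative
                      - r * (ln (exp 1 - y / r) * (- 1 / r))) (at y)"
      by (intro DERIV_cmult DERIV_chain2)
    then show ?thesis
      using r unfolding F_def by simp
  qed
  then have "((\<lambda>y. ln (exp 1 - y / r)) has_integral (F b - F x)) {x..b}"
    using x by (intro fundamental_theorem_of_calculus)
      (auto simp: b_def has_real_derivative_iff_has_vector_derivative
            intro: has_vector_derivative_at_within)
  then have "((\<lambda>y. if y \<in> {x..b} then ln (exp 1 - y / r) else 0) has_integral (F b - F x)) {x..}"
    by (subst has_integral_restrict) auto
  moreover have "(if y \<in> {x..b} then ln (exp 1 - y / r) else 0) = scaled f_log r y"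
    if "y \<in> {x..}" for y
  proof -
    have "y \<le> b \<longleftrightarrow> y / r \<le> exp 1 - 1"
      using r by (simp add: b_def field_simps)
    then show ?thesis
      using that x r by (auto simp: scaled_def f_log_def)
  qed
  ultimately have "(scaled f_log r has_integral (F b - F x)) {x..}"
    by (rule has_integral_eq[rotated]) simp
  moreover have "F b = r"
    using r by (simp add: F_def b_def)
  ultimately show ?thesis
    by (simp add: F_def[of x] add.commute)
qed

lemma Qfun_f_log:
  assumes r: "r > 0" and x: "x \<ge> 0"
  shows "Qfun f_log r x = r * Q_log (x / r)"
proof (cases "x / r \<le> exp 1 - 1")
  case True
  then have "x \<le> r * (exp 1 - 1)"
    using r by (simp add: field_simps)
  moreover have "scaled f_log r x = ln (exp 1 - x / r)"
    using True x r by (simp add: scaled_def f_log_def)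
  ultimately have "Qfun f_log r x = x * ln (exp 1 - x / r)
          + (r * ((exp 1 - x / r) * ln (exp 1 - x / r) - (exp 1 - x / r)) + r)"
    unfolding Qfun_def using integral_unique[OF has_integral_scaled_f_log[OF r x]] by simp
  also have "\<dots> = r * (exp 1 * ln (exp 1 - x / r) - exp 1 + x / r + 1)"
    using r by (simp add: algebra_simps)
  finally show ?thesis
    using True by (simp add: Q_log_def)
next
  case False
  have "(scaled f_log r has_integral 0) {x..}"
  proof (rule has_integral_is_0)
    fix y assume "y \<in> {x..}"
    then have "x / r \<le> y / r"
      using r by (simp add: divide_right_mono)
    then show "scaled f_log r y = 0"
      using False by (simp add: scaled_def f_log_def)
  qed
  from integral_unique[OF this] show ?thesis
    using False r by (simp add: Qfun_def scaled_def[of f_log r x] f_log_def Q_log_def min_def)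
qed

lemma Pfun_f_log:
  assumes "u > 0" "x \<ge> 0" "r > 0"
  shows "Pfun f_log u r x = u * r * Q_log (x / (u * r))"
  using assms by (simp add: Pfun_def Qfun_f_log divide_divide_eq_left)

lemma total_pay_f_log:
  assumes "\<forall>i\<in>S. u i > 0" "\<forall>i\<in>S. d i \<ge> 0" "r > 0"
  shows "total_pay f_log S u d r = (\<Sum>i\<in>S. u i * r * Q_log (d i / (u i * r)))"
  unfolding total_pay_def using assms by (intro sum.cong) (auto simp: Pfun_f_log)

lemma Q_log_antimono:
  assumes "0 \<le> s" "s \<le> t"
  shows "Q_log t \<le> Q_log s"
proof -
  define a where "a = min s (exp 1 - 1)"
  define b where "b = min t (exp 1 - 1)"
  have ab: "0 \<le> a" "a \<le> b" "b \<le> exp 1 - 1"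
    using assms exp_1_ge_2 by (auto simp: a_def b_def)
  have "ln (exp 1 - b) - ln (exp 1 - a) \<le> ((exp 1 - b) - (exp 1 - a)) / (exp 1 - a)"
    using ab by (intro ln_diff_le) auto
  also have "\<dots> = (a - b) / (exp 1 - a)"
    by simp
  also have "\<dots> \<le> (a - b) / exp 1"
    using ab exp_1_ge_2 by (intro divide_left_mono_neg) auto
  finally have "exp 1 * (ln (exp 1 - b) - ln (exp 1 - a)) \<le> a - b"
    by (simp add: field_simps)
  then show ?thesis
    unfolding Q_log_def a_def[symmetric] b_def[symmetric] by (simp add: algebra_simps)
qed

lemma Q_log_0: "Q_log 0 = 1"
  using exp_1_ge_2 by (simp add: Q_log_def min_def)

lemma Q_log_nonneg:
  assumes "t \<ge> 0"
  shows "Q_log t \<ge> 0"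
proof -
  have "Q_log (t + (exp 1 - 1)) = 0"
    using assms by (simp add: Q_log_def)
  then show ?thesis
    using Q_log_antimono[of t "t + (exp 1 - 1)"] assms exp_1_ge_2 by simp
qed

lemma Q_log_le_1: "t \<ge> 0 \<Longrightarrow> Q_log t \<le> 1"
  using Q_log_antimono[of 0 t] Q_log_0 by simp

lemma Q_log_ge_one_minus:
  assumes "t \<ge> 0"
  shows "1 - t \<le> Q_log t"
proof (cases "t \<le> 1")
  case False
  then show ?thesis
    using Q_log_nonneg[OF assms] by simp
next
  case True
  have pos: "exp 1 - t \<ge> exp 1 / 2"
    using True exp_1_ge_2 by simp
  have "ln (exp 1) - ln (exp 1 - t) \<le> (exp 1 - (exp 1 - t)) / (exp 1 - t)"
    using pos exp_1_ge_2 by (intro ln_diff_le) auto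
  also have "\<dots> = t / (exp 1 - t)"
    by simp
  also have "\<dots> \<le> t / (exp 1 / 2)"
    using pos assms exp_1_ge_2 by (intro divide_left_mono) auto
  finally have "exp 1 - 2 * t \<le> exp 1 * ln (exp 1 - t)"
    by (simp add: field_simps)
  moreover have "min t (exp 1 - 1) = t"
    using True exp_1_ge_2 by simp
  ultimately show ?thesis
    by (simp add: Q_log_def)
qed

lemma Q_log_payment_ge:
  assumes "a > 0" "x \<ge> 0"
  shows "a - x \<le> a * Q_log (x / a)"
proof -
  have "a - x = a * (1 - x / a)"
    using assms by (simp add: field_simps)
  also have "\<dots> \<le> a * Q_log (x / a)"
    using assms by (intro mult_left_mono Q_log_ge_one_minus) auto
  finally show ?thesis .
qed

lemma continuous_on_Q_log [continuous_intros]: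
  "continuous_on A g \<Longrightarrow> continuous_on A (\<lambda>x. Q_log (g x))"
  unfolding Q_log_def by (intro continuous_intros) (auto simp: min_def)

context
  fixes S :: "'a set" and u d :: "'a \<Rightarrow> real"
  assumes u_pos: "\<forall>i\<in>S. u i > 0" and d_nonneg: "\<forall>i\<in>S. d i \<ge> 0"
begin

lemma continuous_on_total_pay_f_log: "continuous_on {0<..} (total_pay f_log S u d)"
proof -
  have "continuous_on {0<..} (\<lambda>r. \<Sum>i\<in>S. u i * r * Q_log (d i / (u i * r)))"
    using u_pos by (intro continuous_intros) auto
  then show ?thesis
    by (rule continuous_on_cong[THEN iffD1, rotated 2])
      (auto simp: total_pay_f_log u_pos d_nonneg)
qed

lemma total_pay_f_log_le: "r > 0 \<Longrightarrow> total_pay f_log S u d r \<le> r * (\<Sum>i\<in>S. u i)"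
  unfolding total_pay_f_log[OF u_pos d_nonneg] sum_distrib_left
  using u_pos d_nonneg by (intro sum_mono) (auto intro!: mult_left_le Q_log_le_1 simp: mult.commute)

lemma total_pay_f_log_ge:
  assumes "finite S" "k \<in> S" "r > 0"
  shows "u k * r - d k \<le> total_pay f_log S u d r"
proof -
  have "u k * r - d k \<le> u k * r * Q_log (d k / (u k * r))"
    using assms u_pos d_nonneg by (intro Q_log_payment_ge) auto
  also have "\<dots> \<le> total_pay f_log S u d r"
    unfolding total_pay_f_log[OF u_pos d_nonneg \<open>r > 0\<close>] using assms u_pos d_nonneg
    by (intro member_le_sum) (auto intro!: mult_nonneg_nonneg Q_log_nonneg)
  finally show ?thesis .
qed

lemma total_pay_f_log_rescale:
  assumes "0 < \<rho>" "\<rho> \<le> r"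
  shows "total_pay f_log S u d \<rho> \<le> \<rho> / r * total_pay f_log S u d r"
proof -
  have "u i * \<rho> * Q_log (d i / (u i * \<rho>)) \<le> \<rho> / r * (u i * r * Q_log (d i / (u i * r)))"
    if i: "i \<in> S" for i
  proof -
    have "d i / (u i * r) \<le> d i / (u i * \<rho>)"
      using i u_pos d_nonneg assms by (intro divide_left_mono mult_left_mono) auto
    then have "Q_log (d i / (u i * \<rho>)) \<le> Q_log (d i / (u i * r))"
      using i u_pos d_nonneg assms by (intro Q_log_antimono) auto
    then show ?thesis
      using i u_pos assms by (simp add: mult_left_mono)
  qed
  then have "(\<Sum>i\<in>S. u i * \<rho> * Q_log (d i / (u i * \<rho>)))
             \<le> (\<Sum>i\<in>S. \<rho> / r * (u i * r * Q_log (d i / (u i * r))))"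
    by (rule sum_mono)
  then show ?thesis
    using assms by (simp add: total_pay_f_log u_pos d_nonneg sum_distrib_left)
qed

lemma total_pay_f_log_zero_cost:
  assumes "finite S" "k \<in> S" "\<rho> > 0"
  shows "total_pay f_log S u (d(k := 0)) \<rho> \<le> total_pay f_log S u d \<rho> + d k"
proof -
  have d': "\<forall>i\<in>S. (d(k := 0)) i \<ge> 0"
    using d_nonneg by simp
  have "u k * \<rho> - d k \<le> u k * \<rho> * Q_log (d k / (u k * \<rho>))"
    using assms u_pos d_nonneg by (intro Q_log_payment_ge) auto
  then have "u i * \<rho> * Q_log ((d(k := 0)) i / (u i * \<rho>))
             \<le> u i * \<rho> * Q_log (d i / (u i * \<rho>)) + (if i = k then d k else 0)" for i
    by (simp add: Q_log_0)
  then have "total_pay f_log S u (d(k := 0)) \<rho>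
             \<le> (\<Sum>i\<in>S. u i * \<rho> * Q_log (d i / (u i * \<rho>)) + (if i = k then d k else 0))"
    unfolding total_pay_f_log[OF u_pos d' \<open>\<rho> > 0\<close>] by (intro sum_mono)
  then show ?thesis
    using assms by (simp add: sum.distrib total_pay_f_log u_pos d_nonneg)
qed

context
  fixes B :: real
  assumes finite: "finite S" and nonempty: "S \<noteq> {}" and B_pos: "B > 0"
begin

lemma total_pay_f_log_reaches:
  assumes "\<rho> > 0" "total_pay f_log S u d \<rho> \<le> B"
  shows "\<exists>r\<ge>\<rho>. total_pay f_log S u d r = B"
proof -
  obtain k where k: "k \<in> S"
    using nonempty by auto
  define R where "R = \<rho> + (B + d k) / u k"
  have "(B + d k) / u k \<ge> 0"
    using k u_pos d_nonneg B_pos by (intro divide_nonneg_pos add_nonneg_nonneg) auto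
  then have R: "\<rho> \<le> R" "R > 0"
    using assms by (auto simp: R_def)
  have uk: "u k > 0"
    using k u_pos by simp
  then have "u k * R - d k = B + u k * \<rho>"
    by (simp add: R_def field_simps)
  then have "B \<le> u k * R - d k"
    using uk assms by simp
  also have "\<dots> \<le> total_pay f_log S u d R"
    using total_pay_f_log_ge[OF finite k R(2)] .
  finally have "B \<le> total_pay f_log S u d R" .
  moreover have "continuous_on {\<rho>..R} (total_pay f_log S u d)"
    using continuous_on_total_pay_f_log by (rule continuous_on_subset) (use assms in auto)
  ultimately show ?thesis
    using IVT'[of "total_pay f_log S u d" \<rho> B R] assms R by auto
qed

lemma bdd_above_rates: "bdd_above {r. r > 0 \<and> total_pay f_log S u d r = B}"
proof -
  obtain k where k: "k \<in> S"
    using nonempty by auto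
  have "r \<le> (B + d k) / u k" if "r > 0" "total_pay f_log S u d r = B" for r
    using total_pay_f_log_ge[OF finite k \<open>r > 0\<close>] that k u_pos
    by (simp add: field_simps mult.commute)
  then show ?thesis
    by (auto simp: bdd_above_def)
qed

lemma le_stopping_rate:
  assumes "\<rho> > 0" "total_pay f_log S u d \<rho> \<le> B"
  shows "\<rho> \<le> stopping_rate f_log B S u d"
proof -
  obtain r where "\<rho> \<le> r" "total_pay f_log S u d r = B"
    using total_pay_f_log_reaches[OF assms] by auto
  with assms have "r \<in> {r. r > 0 \<and> total_pay f_log S u d r = B}"
    by auto
  from cSup_upper[OF this bdd_above_rates] \<open>\<rho> \<le> r\<close> show ?thesis
    by (simp add: stopping_rate_def)
qed

lemma small_rate_pays_le:
  obtains \<epsilon> where "\<epsilon> > 0" "total_pay f_log S u d \<epsilon> \<le> B"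
proof
  have su: "(\<Sum>i\<in>S. u i) \<ge> 0"
    using u_pos by (intro sum_nonneg) auto
  show "B / ((\<Sum>i\<in>S. u i) + 1) > 0"
    using su B_pos by simp
  then have "total_pay f_log S u d (B / ((\<Sum>i\<in>S. u i) + 1))
             \<le> B / ((\<Sum>i\<in>S. u i) + 1) * (\<Sum>i\<in>S. u i)"
    by (rule total_pay_f_log_le)
  also have "\<dots> \<le> B"
    using su B_pos by (simp add: field_simps)
  finally show "total_pay f_log S u d (B / ((\<Sum>i\<in>S. u i) + 1)) \<le> B" .
qed

lemma stopping_rate_pos: "stopping_rate f_log B S u d > 0"
  using small_rate_pays_le le_stopping_rate by (metis order.strict_trans2)

lemma stopping_rate_le:
  assumes "\<And>r. r > 0 \<Longrightarrow> total_pay f_log S u d r = B \<Longrightarrow> r \<le> y"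
  shows "stopping_rate f_log B S u d \<le> y"
proof -
  obtain \<epsilon> where "\<epsilon> > 0" "total_pay f_log S u d \<epsilon> \<le> B"
    using small_rate_pays_le .
  then obtain r where "r \<ge> \<epsilon>" "total_pay f_log S u d r = B"
    using total_pay_f_log_reaches by blast
  with \<open>\<epsilon> > 0\<close> have "r \<in> {r. r > 0 \<and> total_pay f_log S u d r = B}"
    by simp
  then have "{r. r > 0 \<and> total_pay f_log S u d r = B} \<noteq> {}"
    by blast
  then show ?thesis
    unfolding stopping_rate_def using assms by (intro cSup_least) auto
qed

end

end

lemma stopping_rate_zero_cost_ge:
  assumes "finite S" "B > 0" "\<forall>i\<in>S. u i > 0" "\<forall>i\<in>S. c i \<ge> 0" "k \<in> S"
    and "0 \<le> \<theta>" "\<theta> < 1" "c k \<le> \<theta> * B"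
    and "r > 0" "total_pay f_log S u c r = B"
  shows "(1 - \<theta>) * r \<le> stopping_rate f_log B S u (c(k := 0))"
proof -
  have \<rho>: "0 < (1 - \<theta>) * r" "(1 - \<theta>) * r \<le> r"
    using assms(6,7,9) by (auto simp: mult_left_le_one_le)
  have "total_pay f_log S u (c(k := 0)) ((1 - \<theta>) * r)
        \<le> total_pay f_log S u c ((1 - \<theta>) * r) + c k"
    using total_pay_f_log_zero_cost[OF assms(3,4,1,5) \<rho>(1)] .
  also have "\<dots> \<le> (1 - \<theta>) * B + c k"
    using total_pay_f_log_rescale[OF assms(3,4) \<rho>] assms(9,10) by simp
  also have "\<dots> \<le> B"
    using assms(8) by (simp add: algebra_simps)
  finally show ?thesis
    using assms(1-5) \<rho>(1) by (intro le_stopping_rate) auto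
qed

theorem lemma10:
  fixes S :: "'a set" and u c :: "'a \<Rightarrow> real" and B :: real and k :: 'a
  assumes "finite S"
    and "B > 0"
    and "\<forall>i\<in>S. u i > 0"
    and "\<forall>i\<in>S. c i \<ge> 0"
    and "k \<in> S"
  shows "stopping_rate f_log B S u (c(k := 0))
           \<ge> (1 - Max (c ` S) / B) * stopping_rate f_log B S u c"
proof -
  define \<theta> where "\<theta> = Max (c ` S) / B"
  have S: "S \<noteq> {}" and c': "\<forall>i\<in>S. (c(k := 0)) i \<ge> 0"
    using assms by auto
  have "0 \<le> c k" "c k \<le> Max (c ` S)"
    using assms by simp_all
  then have ck: "c k \<le> \<theta> * B" and \<theta>: "\<theta> \<ge> 0"
    using assms(2) by (simp_all add: \<theta>_def)
  note rate_pos = stopping_rate_pos[OF assms(3) _ assms(1) S assms(2)]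
  show ?thesis
  proof (cases "\<theta> < 1")
    case True
    have "stopping_rate f_log B S u c \<le> stopping_rate f_log B S u (c(k := 0)) / (1 - \<theta>)"
      using stopping_rate_zero_cost_ge[OF assms \<theta> True ck] True
      by (intro stopping_rate_le[OF assms(3,4,1) S assms(2)]) (simp add: field_simps mult.commute)
    with True show ?thesis
      by (simp add: \<theta>_def field_simps mult.commute)
  next
    case False
    then have "(1 - \<theta>) * stopping_rate f_log B S u c \<le> 0"
      using rate_pos[OF assms(4)] by (intro mult_nonpos_nonneg) auto
    with rate_pos[OF c'] show ?thesis
      unfolding \<theta>_def by linarith
  qed
qed

end
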